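(* Let $k\in\{1,\dots,n\}$ and let $R$ be a $k$-upper run of an $n$-DPDA. Then $R$ is $(k-1)$-upper if and only if $|\mathrm{top}^k(R(0))|\le|\mathrm{top}^k(R(i))|$ for every $i\in\{0,\dots,|R|\}$ such that $R[i,|R|]$ is $k$-upper.
   Context: Stacks: fix order $n\ge1$, finite stack alphabet $\Gamma$. A $0$-stack is $(\gamma,x)$ with $\gamma\in\Gamma$, $x=(x_n,\dots,x_1)$ a vector of $n$ positive integers (position). For $k\in\{1,\dots,n\}$ a $k$-stack is a finite list $[s_1,\dots,s_m]$ ($m\ge0$) of nonempty $(k-1)$-stacks such that for some $x_n,\dots,x_{k+1}$, every position in $s_i$ has the form $(x_n,\dots,x_{k+1},i,y_{k-1},\dots,y_1)$. The top is at the right; $|s^k|$ is the number of $(k-1)$-stacks in $s^k$; $s^k:s^{k-1}$ appends at the top (right-associative); for $s^r=t^r:t^{r-1}:\dots:t^k$, $\mathrm{top}^k(s^r)=t^k$. Equality of stacks includes positions. For $k<n$, $\mathsf p_{+1}(s^k)$ adds $1$ to the $(n-k)$-th coordinate of all positions. Operations of order $k\ge1$: $\mathsf{pop}^k(s^r:\dots:s^k:s^{k-1})=s^r:\dots:s^k$, defined only if the topmost $k$-stack has at least two $(k-1)$-stacks; $\mathsf{push}^k_\gamma(s^r:\dots:s^0)=s^r:\dots:s^{k+1}:(s^k:\dots:s^0):\mathsf p_{+1}(s^{k-1}:\dots:s^1:(\gamma,x))$ where $s^0=(\gamma',x)$. An $n$-DPDA has transitions determined by state and topmost stack symbol, each either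 $\mathrm{read}(\vec q)$ ($\vec q:A\to Q$ injective; leads to $(\vec q(a),s)$, reading $a$) or $(q,op)$ with $op$ a stack operation of order $\le n$ (leads to $(q,op(s))$ if defined). Configurations are (state, nonempty $n$-stack). A run is a finite sequence $R=c_0,\dots,c_m$ with each $c_i$ a successor of $c_{i-1}$; $R(i)=c_i$, $|R|=m$, $R[i,j]=c_i,\dots,c_j$. $\mathrm{top}^k(c)$ refers to the stack of $c$. History: for a run $R$ and a $0$-stack $s^0$ of $R(|R|)$, $\mathrm{hist}(R,s^0)$ is a $0$-stack of $R(0)$: if $|R|=0$ it is $s^0$; if $R=S\circ T$, $|T|=1$, and the last step is a read or a $\mathsf{pop}$, or a $\mathsf{push}^r_\gamma$ with $s^0$ not in the topmost $(r-1)$-stack of $R(|R|)$, it is $\mathrm{hist}(S,s^0)$; if the last step is $\mathsf{push}^r_\gamma$ and $s^0$ is in the topmost $(r-1)$-stack of $R(|R|)$, it is $\mathrm{hist}(S,t^0)$ with $t^0$ equal to $s^0$ with the $(n-r+1)$-th position coordinate decreased by $1$. For a $k$-stack $s^k$ of $R(|R|)$, $k\ge1$, $\mathrm{hist}(R,s^k)$ is the $k$-stack of $R(0)$ containing $\mathrm{hist}(R,s^0)$ for all $0$-stacks $s^0$ of $s^k$. For $k\in\{0,\dots,n\}$, $R$ is $k$-upper if $\mathrm{hist}(R,\mathrm{top}^k(R(|R|)))=\mathrm{top}^k(R(0))$. *)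

theory Defs
  imports Main
begin

text \<open>A stack is represented as a tree; the position vector
(x_n,...,x_1) of a 0-stack inside an n-stack is exactly its path of (1-based)
indices from the outermost list, so positions are represented by such paths
(lists of length n, leftmost entry = x_n).\<close>

datatype 'g stk = Z 'g | L "'g stk list"

fun children :: "'g stk \<Rightarrow> 'g stk list" where
  "children (L xs) = xs"
| "children (Z _) = []"

primrec wf :: "nat \<Rightarrow> 'g stk \<Rightarrow> bool" where
  "wf 0 s = (case s of Z _ \<Rightarrow> True | L _ \<Rightarrow> False)"
| "wf (Suc d) s = (case s of Z _ \<Rightarrow> False
                    | L xs \<Rightarrow> xs \<noteq> [] \<and> (\<forall>x\<in>set xs. wf d x))"

primrec descend :: "nat \<Rightarrow> 'g stk \<Rightarrow> 'g stk" where
  "descend 0 s = s"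
| "descend (Suc d) s = descend d (last (children s))"

definition topk :: "nat \<Rightarrow> nat \<Rightarrow> 'g stk \<Rightarrow> 'g stk" where
  "topk n k s = descend (n - k) s"

definition topk_len :: "nat \<Rightarrow> nat \<Rightarrow> 'g stk \<Rightarrow> nat" where
  "topk_len n k s = length (children (topk n k s))"

definition topsym :: "nat \<Rightarrow> 'g stk \<Rightarrow> 'g" where
  "topsym n s = (case descend n s of Z g \<Rightarrow> g | L _ \<Rightarrow> undefined)"

text \<open>common position prefix (x_n,...,x_{k+1}) of the topmost k-stack when descending d = n-k levels\<close>
primrec tpath :: "nat \<Rightarrow> 'g stk \<Rightarrow> nat list" where
  "tpath 0 s = []"
| "tpath (Suc d) s = length (children s) # tpath d (last (children s))"

definition topaddr :: "nat \<Rightarrow> nat \<Rightarrow> 'g stk \<Rightarrow> nat list" where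
  "topaddr n k s = tpath (n - k) s"

primrec pos :: "nat \<Rightarrow> 'g stk \<Rightarrow> nat list set" where
  "pos 0 s = {[]}"
| "pos (Suc d) s = {Suc i # p | i p. i < length (children s) \<and> p \<in> pos d (children s ! i)}"

primrec modtop :: "nat \<Rightarrow> ('g stk \<Rightarrow> 'g stk) \<Rightarrow> 'g stk \<Rightarrow> 'g stk" where
  "modtop 0 f s = f s"
| "modtop (Suc d) f s = L (butlast (children s) @ [modtop d f (last (children s))])"

primrec settop :: "nat \<Rightarrow> 'g \<Rightarrow> 'g stk \<Rightarrow> 'g stk" where
  "settop 0 \<gamma> s = Z \<gamma>"
| "settop (Suc d) \<gamma> s = L (butlast (children s) @ [settop d \<gamma> (last (children s))])"

datatype 'g op = Pop nat | Push nat 'g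

fun apply_op :: "nat \<Rightarrow> 'g op \<Rightarrow> 'g stk \<Rightarrow> 'g stk option" where
  "apply_op n (Pop k) s =
     (if 1 \<le> k \<and> k \<le> n \<and> 2 \<le> length (children (topk n k s))
      then Some (modtop (n - k) (\<lambda>t. L (butlast (children t))) s) else None)"
| "apply_op n (Push k \<gamma>) s =
     (if 1 \<le> k \<and> k \<le> n
      then Some (modtop (n - k)
              (\<lambda>t. L (children t @ [settop (k - 1) \<gamma> (last (children t))])) s)
      else None)"

datatype ('q, 'a, 'g) tr = Read "'a \<Rightarrow> 'q" | Op 'q "'g op"

type_synonym ('q, 'a, 'g) dpda = "'q \<Rightarrow> 'g \<Rightarrow> ('q, 'a, 'g) tr option"

definition is_dpda :: "nat \<Rightarrow> ('q, 'a, 'g) dpda \<Rightarrow> bool" where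
  "is_dpda n \<delta> \<longleftrightarrow> (\<forall>q g f. \<delta> q g = Some (Read f) \<longrightarrow> inj f)
      \<and> (\<forall>q g p k. \<delta> q g = Some (Op p (Pop k)) \<longrightarrow> 1 \<le> k \<and> k \<le> n)
      \<and> (\<forall>q g p k \<gamma>. \<delta> q g = Some (Op p (Push k \<gamma>)) \<longrightarrow> 1 \<le> k \<and> k \<le> n)"

type_synonym ('q, 'g) conf = "'q \<times> 'g stk"

definition succ :: "nat \<Rightarrow> ('q, 'a, 'g) dpda \<Rightarrow> ('q, 'g) conf \<Rightarrow> ('q, 'g) conf \<Rightarrow> bool" where
  "succ n \<delta> c c' = (case \<delta> (fst c) (topsym n (snd c)) of
       None \<Rightarrow> False
     | Some (Read f) \<Rightarrow> snd c' = snd c \<and> (\<exists>a. fst c' = f a)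
     | Some (Op p opr) \<Rightarrow> fst c' = p \<and> apply_op n opr (snd c) = Some (snd c'))"

text \<open>A run R = c_0,...,c_m is a nonempty list; |R| = length R - 1, R(i) = R ! i,
  R[i,|R|] = drop i R.\<close>
definition is_run :: "nat \<Rightarrow> ('q, 'a, 'g) dpda \<Rightarrow> ('q, 'g) conf list \<Rightarrow> bool" where
  "is_run n \<delta> R \<longleftrightarrow> R \<noteq> [] \<and> (\<forall>c\<in>set R. wf n (snd c))
      \<and> (\<forall>i. 0 < i \<and> i < length R \<longrightarrow> succ n \<delta> (R ! (i - 1)) (R ! i))"

text \<open>one step of history: position a of a 0-stack of c' (successor of c) to
  the position of the corresponding 0-stack of c\<close>
definition hist_step :: "nat \<Rightarrow> ('q, 'a, 'g) dpda \<Rightarrow> ('q, 'g) conf \<Rightarrow> ('q, 'g) conf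
                          \<Rightarrow> nat list \<Rightarrow> nat list" where
  "hist_step n \<delta> c c' a = (case \<delta> (fst c) (topsym n (snd c)) of
       Some (Op p (Push r \<gamma>)) \<Rightarrow>
         (if take (n - r + 1) a = topaddr n (r - 1) (snd c')
          then a[n - r := a ! (n - r) - 1] else a)
     | _ \<Rightarrow> a)"

primrec histN :: "nat \<Rightarrow> ('q, 'a, 'g) dpda \<Rightarrow> ('q, 'g) conf list \<Rightarrow> nat \<Rightarrow> nat list \<Rightarrow> nat list" where
  "histN n \<delta> R 0 a = a"
| "histN n \<delta> R (Suc i) a = histN n \<delta> R i (hist_step n \<delta> (R ! i) (R ! Suc i) a)"

definition hist0 :: "nat \<Rightarrow> ('q, 'a, 'g) dpda \<Rightarrow> ('q, 'g) conf list \<Rightarrow> nat list \<Rightarrow> nat list" where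
  "hist0 n \<delta> R a = histN n \<delta> R (length R - 1) a"

text \<open>hist(R, s^k) is the k-stack of R(0) at position prefix q, where s^k is the k-stack
  of R(|R|) at position prefix p: it contains hist(R,s^0) for all 0-stacks s^0 of s^k.\<close>
definition hist_is :: "nat \<Rightarrow> ('q, 'a, 'g) dpda \<Rightarrow> ('q, 'g) conf list \<Rightarrow> nat
                        \<Rightarrow> nat list \<Rightarrow> nat list \<Rightarrow> bool" where
  "hist_is n \<delta> R k p q \<longleftrightarrow>
     (\<forall>a \<in> pos n (snd (last R)). take (n - k) a = p \<longrightarrow>
        hist0 n \<delta> R a \<in> pos n (snd (hd R)) \<and> take (n - k) (hist0 n \<delta> R a) = q)"

text \<open>R is k-upper iff hist(R, top^k(R(|R|))) = top^k(R(0))\<close>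
definition upper :: "nat \<Rightarrow> ('q, 'a, 'g) dpda \<Rightarrow> nat \<Rightarrow> ('q, 'g) conf list \<Rightarrow> bool" where
  "upper n \<delta> k R \<longleftrightarrow> hist_is n \<delta> R k (topaddr n k (snd (last R))) (topaddr n k (snd (hd R)))"

end

theory Submission
  imports Defs
begin

text \<open>Histories only ever decrease position coordinates. Let \<open>m = n - k\<close>, so that coordinate
\<open>m\<close> of a position is the index of its \<open>(k-1)\<close>-stack inside its \<open>k\<close>-stack. A single step
decreases this coordinate only when it is a \<open>push\<^sup>k\<close> and the position lies in the copied
topmost \<open>(k-1)\<close>-stack; the earlier position then lies in \<open>top\<^sup>k\<^sup>-\<^sup>1\<close>. Follow the topmost
0-stack of \<open>R(|R|)\<close> backwards. If \<open>R\<close> is \<open>(k-1)\<close>-upper, its coordinate \<open>m\<close> ends at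
\<open>|top\<^sup>k(R(0))|\<close>, while at any \<open>i\<close> with \<open>R[i,|R|]\<close> \<open>k\<close>-upper it is at most \<open>|top\<^sup>k(R(i))|\<close>.
Conversely, let \<open>j\<close> be the first index at which the history lies in \<open>top\<^sup>k\<^sup>-\<^sup>1(R(j))\<close>; before
\<open>j\<close> the coordinate does not change, and \<open>R[j,|R|]\<close> is \<open>k\<close>-upper, so the hypothesis squeezes
the coordinate at \<open>0\<close> to exactly \<open>|top\<^sup>k(R(0))|\<close>.\<close>

section \<open>Positions in higher-order stacks\<close>

text \<open>For an \<open>n\<close>-stack \<open>s\<close>, \<open>in_top (n - k) s a\<close> says that position \<open>a\<close> lies in \<open>top\<^sup>k(s)\<close>.\<close>

definition in_top :: "nat \<Rightarrow> 'g stk \<Rightarrow> nat list \<Rightarrow> bool" where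
  "in_top d s a \<longleftrightarrow> take d a = tpath d s"

lemma wf_SucE:
  assumes "wf (Suc d) s"
  obtains cs where "s = L cs" "cs \<noteq> []" "\<forall>x\<in>set cs. wf d x"
  using assms by (cases s) auto

lemma length_pos: "a \<in> pos N s \<Longrightarrow> length a = N"
  by (induction N arbitrary: a s) auto

lemma tpath_Suc_snoc: "tpath (Suc m) s = tpath m s @ [length (children (descend m s))]"
  by (induction m arbitrary: s) auto

lemma take_tpath: "m \<le> m' \<Longrightarrow> take m (tpath m' s) = tpath m s"
proof (induction m arbitrary: m' s)
  case (Suc m)
  then show ?case by (cases m') auto
qed simp

lemma in_top_Suc:
  "m < length a \<Longrightarrow>
   in_top (Suc m) s a \<longleftrightarrow> in_top m s a \<and> a ! m = length (children (descend m s))"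
  by (auto simp: in_top_def take_Suc_conv_app_nth tpath_Suc_snoc simp del: tpath.simps)

lemma in_top_tpath: "m \<le> N \<Longrightarrow> in_top m s (tpath N s)"
  by (simp add: in_top_def take_tpath)

lemma tpath_append_pos:
  assumes "wf N s" "m \<le> N" "p \<in> pos (N - m) (descend m s)"
  shows "tpath m s @ p \<in> pos N s"
  using assms
proof (induction m arbitrary: N s)
  case (Suc m)
  then obtain N' where N: "N = Suc N'" by (cases N) auto
  from Suc.prems(1) obtain cs where cs: "s = L cs" "cs \<noteq> []" "\<forall>x\<in>set cs. wf N' x"
    unfolding N by (rule wf_SucE)
  have "wf N' (last cs)" using cs by simp
  then have "tpath m (last cs) @ p \<in> pos N' (last cs)" using Suc N cs by simp
  then have "tpath m (last cs) @ p \<in> pos N' (cs ! (length cs - 1))"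
    using cs by (simp add: last_conv_nth)
  then show ?case
    using cs N by (auto intro!: exI[of _ "length cs - 1"])
qed simp

lemma tpath_pos: "wf N s \<Longrightarrow> tpath N s \<in> pos N s"
  using tpath_append_pos[of N s N "[]"] by simp

lemma pos_nth_le_length:
  assumes "a \<in> pos N s" "m < N" "in_top m s a"
  shows "a ! m \<le> length (children (descend m s))"
  using assms unfolding in_top_def
proof (induction m arbitrary: s a N)
  case 0
  then show ?case by (cases N) auto
next
  case (Suc m)
  then obtain N' where N: "N = Suc N'" by (cases N) auto
  with Suc.prems obtain i p where ip: "a = Suc i # p" "i < length (children s)"
    "p \<in> pos N' (children s ! i)" by auto
  with Suc.prems have "Suc i = length (children s)" "take m p = tpath m (last (children s))"
    by auto
  then have "children s ! i = last (children s)"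
    by (metis diff_Suc_1 last_conv_nth list.size(3) nat.distinct(1))
  then show ?case using Suc.IH[of p N' "last (children s)"] ip Suc.prems N
      \<open>take m p = _\<close> by auto
qed

lemma wf_descend: "wf N s \<Longrightarrow> m \<le> N \<Longrightarrow> wf (N - m) (descend m s)"
proof (induction m arbitrary: N s)
  case (Suc m)
  then obtain N' where N: "N = Suc N'" by (cases N) auto
  from Suc.prems(1) obtain cs where "s = L cs" "cs \<noteq> []" "\<forall>x\<in>set cs. wf N' x"
    unfolding N by (rule wf_SucE)
  then show ?case using Suc N by simp
qed simp

lemma tpath_descend_modtop:
  "wf N s \<Longrightarrow> m \<le> N \<Longrightarrow>
   tpath m (modtop m f s) = tpath m s \<and> descend m (modtop m f s) = f (descend m s)"
proof (induction m arbitrary: N s)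
  case (Suc m)
  then obtain N' where N: "N = Suc N'" by (cases N) auto
  from Suc.prems(1) obtain cs where cs: "s = L cs" "cs \<noteq> []" "\<forall>x\<in>set cs. wf N' x"
    unfolding N by (rule wf_SucE)
  then have "wf N' (last cs)" by simp
  then show ?case using Suc.IH[of N' "last cs"] Suc.prems N cs by auto
qed simp

lemma pos_modtop:
  assumes "wf N s" "m \<le> N" "a \<in> pos N (modtop m f s)"
  shows "(in_top m s a \<longrightarrow> drop m a \<in> pos (N - m) (f (descend m s)))
       \<and> (\<not> in_top m s a \<longrightarrow> a \<in> pos N s)"
  using assms unfolding in_top_def
proof (induction m arbitrary: N s a)
  case (Suc m)
  then obtain N' where N: "N = Suc N'" by (cases N) auto
  from Suc.prems(1) obtain cs where cs: "s = L cs" "cs \<noteq> []" "\<forall>x\<in>set cs. wf N' x"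
    unfolding N by (rule wf_SucE)
  from Suc.prems N cs obtain i p where ip: "a = Suc i # p" "i < length cs"
    "p \<in> pos N' ((butlast cs @ [modtop m f (last cs)]) ! i)" by auto
  show ?case
  proof (cases "i < length cs - 1")
    case True
    then have "p \<in> pos N' (cs ! i)" using ip by (simp add: nth_append nth_butlast)
    then show ?thesis using ip cs N True by auto
  next
    case False
    then have i: "i = length cs - 1" using ip by auto
    then have "p \<in> pos N' (modtop m f (last cs))" using ip cs by (simp add: nth_append)
    moreover have "wf N' (last cs)" using cs by simp
    ultimately have "(take m p = tpath m (last cs) \<longrightarrow> drop m p \<in> pos (N' - m) (f (descend m (last cs))))
       \<and> (take m p \<noteq> tpath m (last cs) \<longrightarrow> p \<in> pos N' (last cs))"
      using Suc N by simp
    moreover have "last cs = cs ! i" "length cs = Suc i" using i cs by (simp_all add: last_conv_nth)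
    ultimately show ?thesis using ip cs N by auto
  qed
qed simp

lemma pos_settop: "wf j x \<Longrightarrow> pos j (settop j \<gamma> x) = pos j x"
proof (induction j arbitrary: x)
  case (Suc j)
  from Suc.prems obtain cs where cs: "x = L cs" "cs \<noteq> []" "\<forall>x\<in>set cs. wf j x"
    by (rule wf_SucE)
  have "pos j ((butlast cs @ [settop j \<gamma> (last cs)]) ! i) = pos j (cs ! i)"
    if "i < length cs" for i
  proof (cases "i < length cs - 1")
    case True
    then show ?thesis by (simp add: nth_append nth_butlast)
  next
    case False
    then have "i = length cs - 1" using that by auto
    moreover have "wf j (last cs)" using cs by simp
    ultimately show ?thesis using Suc.IH cs by (simp add: nth_append last_conv_nth)
  qed
  then show ?case using cs by auto
qed simp

lemma pos_pop: "pos (Suc d) (L (butlast (children t))) \<subseteq> pos (Suc d) t"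
  by (auto simp: nth_butlast)

lemma append_take_drop_update:
  "m < length a \<Longrightarrow> a[m := v] = take m a @ (drop m a)[0 := v]"
  by (metis append_take_drop_id length_take list_update_append min.absorb4 diff_self_eq_0
      less_irrefl)

lemma pos_pop_modtop:
  assumes "wf N s" "m < N" "a \<in> pos N (modtop m (\<lambda>t. L (butlast (children t))) s)"
  shows "a \<in> pos N s"
proof (cases "in_top m s a")
  case True
  obtain d where d: "N - m = Suc d" using assms(2) by (metis Suc_diff_Suc)
  have "drop m a \<in> pos (Suc d) (L (butlast (children (descend m s))))"
    using pos_modtop[OF assms(1) _ assms(3)] assms(2) True d by simp
  then have "drop m a \<in> pos (N - m) (descend m s)"
    using pos_pop d by (metis subsetD)
  then have "tpath m s @ drop m a \<in> pos N s"
    using assms by (intro tpath_append_pos) auto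
  then show ?thesis using True by (metis append_take_drop_id in_top_def)
next
  case False
  then show ?thesis using pos_modtop[OF assms(1) _ assms(3)] assms(2) by simp
qed

lemma pos_push_modtop:
  assumes "wf N s" "m < N"
    and "a \<in> pos N (modtop m (\<lambda>t. L (children t @ [settop (N - Suc m) \<gamma> (last (children t))])) s)"
  shows "(if in_top m s a \<and> a ! m = Suc (length (children (descend m s)))
          then a[m := a ! m - 1] else a) \<in> pos N s"
proof (cases "in_top m s a")
  case False
  then show ?thesis using pos_modtop[OF assms(1) _ assms(3)] assms(2) by simp
next
  case top: True
  define t where "t = descend m s"
  obtain j where j: "N - m = Suc j" "N - Suc m = j" using assms(2) by (metis Suc_diff_Suc)
  have wft: "wf (Suc j) t" using wf_descend[OF assms(1), of m] assms(2) j by (simp add: t_def)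
  have "drop m a \<in> pos (Suc j) (L (children t @ [settop j \<gamma> (last (children t))]))"
    using pos_modtop[OF assms(1) _ assms(3)] assms(2) top j by (simp add: t_def)
  then obtain i p where ip: "drop m a = Suc i # p" "i < Suc (length (children t))"
    "p \<in> pos j ((children t @ [settop j \<gamma> (last (children t))]) ! i)" by auto
  have ml: "m < length a" using length_pos[OF assms(3)] assms(2) by simp
  then have am: "a ! m = Suc i" using ip(1) by (metis hd_drop_conv_nth list.sel(1))
  have a_split: "a = tpath m s @ drop m a"
    using top by (metis append_take_drop_id in_top_def)
  show ?thesis
  proof (cases "i = length (children t)")
    case True
    have ne: "children t \<noteq> []" using wft by (cases t) auto
    then have "wf j (last (children t))" using wft by (cases t) auto
    then have "p \<in> pos j (last (children t))"
      using ip(3) True by (simp add: pos_settop)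
    then have "p \<in> pos j (children t ! (i - 1))"
      using True ne by (simp add: last_conv_nth)
    then have "i # p \<in> pos (Suc j) t" using True ne by (auto intro!: exI[of _ "i - 1"])
    then have "tpath m s @ i # p \<in> pos N s"
      using assms j by (intro tpath_append_pos) (auto simp: t_def)
    moreover have "a[m := a ! m - 1] = tpath m s @ i # p"
      using append_take_drop_update[OF ml] top ip(1) am by (simp add: in_top_def)
    ultimately show ?thesis using top am True by (simp add: t_def)
  next
    case False
    then have "drop m a \<in> pos (Suc j) t" using ip by (auto simp: nth_append)
    then have "a \<in> pos N s"
      using a_split assms j by (metis tpath_append_pos less_imp_le t_def)
    then show ?thesis using am False by (simp add: t_def)
  qed
qed

section \<open>One step of history\<close>

lemma length_hist_step: "length (hist_step n \<delta> c c' a) = length a"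
  by (auto simp: hist_step_def split: option.split tr.split op.split)

lemma hist_step_cases:
  assumes "succ n \<delta> c c'" "wf n (snd c)" "length a = n"
  obtains (Push) r \<gamma> where "1 \<le> r" "r \<le> n"
    "snd c' = modtop (n - r) (\<lambda>t. L (children t @ [settop (r - 1) \<gamma> (last (children t))])) (snd c)"
    "hist_step n \<delta> c c' a =
      (if in_top (n - r) (snd c) a \<and> a ! (n - r) = Suc (length (children (descend (n - r) (snd c))))
       then a[n - r := a ! (n - r) - 1] else a)"
  | (Pop) k where "1 \<le> k" "k \<le> n"
    "snd c' = modtop (n - k) (\<lambda>t. L (butlast (children t))) (snd c)" "hist_step n \<delta> c c' a = a"
  | (Read) "snd c' = snd c" "hist_step n \<delta> c c' a = a"
proof (cases "\<delta> (fst c) (topsym n (snd c))")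
  case None
  then show ?thesis using assms(1) by (simp add: succ_def)
next
  case (Some t)
  show ?thesis
  proof (cases t)
    case (Read f)
    then show ?thesis using that(3) assms(1) Some by (simp add: succ_def hist_step_def)
  next
    case (Op p opr)
    show ?thesis
    proof (cases opr)
      case (Pop k)
      then show ?thesis
        using that(2) assms(1) Some Op by (simp add: succ_def hist_step_def split: if_splits)
    next
      case (Push r \<gamma>)
      define g where "g = (\<lambda>t. L (children t @ [settop (r - 1) \<gamma> (last (children t))]))"
      have r: "1 \<le> r" "r \<le> n" and c': "snd c' = modtop (n - r) g (snd c)"
        using assms(1) Some Op Push by (auto simp: succ_def g_def split: if_splits)
      have "take (n - r + 1) a = topaddr n (r - 1) (snd c') \<longleftrightarrow> in_top (Suc (n - r)) (snd c') a"
        using r by (simp add: topaddr_def in_top_def Suc_diff_le)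
      also have "\<dots> \<longleftrightarrow> in_top (n - r) (snd c') a
          \<and> a ! (n - r) = length (children (descend (n - r) (snd c')))"
        using r assms(3) by (intro in_top_Suc) simp
      also have "\<dots> \<longleftrightarrow> in_top (n - r) (snd c) a
          \<and> a ! (n - r) = Suc (length (children (descend (n - r) (snd c))))"
        using tpath_descend_modtop[OF assms(2), of "n - r" g] r c'
        by (simp add: in_top_def g_def)
      finally show ?thesis
        using that(1)[OF r, of \<gamma>] c' Some Op Push by (simp add: hist_step_def g_def)
    qed
  qed
qed

lemma hist_step_pos:
  assumes "succ n \<delta> c c'" "wf n (snd c)" "a \<in> pos n (snd c')"
  shows "hist_step n \<delta> c c' a \<in> pos n (snd c)"
  using assms(1,2) length_pos[OF assms(3)]
proof (cases rule: hist_step_cases)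
  case (Push r \<gamma>)
  have "n - Suc (n - r) = r - 1" using Push by simp
  then show ?thesis using pos_push_modtop[OF assms(2), of "n - r" a \<gamma>] assms(3) Push by simp
next
  case (Pop k)
  then show ?thesis using pos_pop_modtop[OF assms(2), of "n - k" a] assms(3) by simp
next
  case Read
  then show ?thesis using assms(3) by simp
qed

lemma nth_update_decr_le: "a[i := a ! i - 1] ! j \<le> (a ! j :: nat)"
  by (cases "i = j"; cases "i < length a") (auto simp: list_update_beyond)

lemma hist_step_nth_le: "hist_step n \<delta> c c' a ! j \<le> a ! j"
  using nth_update_decr_le by (auto simp: hist_step_def split: option.split tr.split op.split)

lemma in_top_hist_step_if_nth_changed:
  assumes "succ n \<delta> c c'" "wf n (snd c)" "length a = n" "m < n"
    and "hist_step n \<delta> c c' a ! m \<noteq> a ! m"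
  shows "in_top (Suc m) (snd c) (hist_step n \<delta> c c' a)"
  using assms(1-3)
proof (cases rule: hist_step_cases)
  case (Push r \<gamma>)
  then have "in_top (n - r) (snd c) a" "a ! (n - r) = Suc (length (children (descend (n - r) (snd c))))"
    and step: "hist_step n \<delta> c c' a = a[n - r := a ! (n - r) - 1]"
    using assms(5) by (auto split: if_splits)
  moreover from step have "m = n - r" using assms(5) by (metis nth_list_update_neq)
  ultimately show ?thesis
    using assms(3,4) by (simp add: in_top_Suc) (simp add: in_top_def)
qed (use assms(5) in simp_all)

lemma take_cond_decr_eq:
  assumes "take m a = take m b"
  shows "take m (if take (Suc i) a = X then a[i := a ! i - 1] else a)
       = take m (if take (Suc i) b = X then b[i := b ! i - 1] else b)"
proof (cases "i < m")
  case True
  then have "take (Suc i) a = take (Suc i) b" "a ! i = b ! i"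
    using assms by (metis Suc_leI min.absorb1 take_take, metis nth_take)
  then show ?thesis using assms by (simp add: take_update_swap)
next
  case False
  then show ?thesis using assms by simp
qed

lemma take_hist_step_eq:
  "take m a = take m b \<Longrightarrow> take m (hist_step n \<delta> c c' a) = take m (hist_step n \<delta> c c' b)"
  using take_cond_decr_eq[of m a b]
  by (auto simp: hist_step_def split: option.split tr.split op.split)

section \<open>Histories along runs\<close>

lemma histN_Cons: "histN n \<delta> (c # cs) (Suc i) a = hist_step n \<delta> c (cs ! 0) (histN n \<delta> cs i a)"
  by (induction i arbitrary: a) simp_all

lemma hist0_singleton: "hist0 n \<delta> [c] a = a"
  by (simp add: hist0_def)

lemma hist0_Cons_Cons: "hist0 n \<delta> (c # c' # cs) a = hist_step n \<delta> c c' (hist0 n \<delta> (c' # cs) a)"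
  unfolding hist0_def by (simp only: length_Cons diff_Suc_1 histN_Cons nth_Cons_0)

lemma length_hist0: "length (hist0 n \<delta> R a) = length a"
proof -
  have "length (histN n \<delta> R i b) = length b" for i b
    by (induction i arbitrary: b) (simp_all add: length_hist_step)
  then show ?thesis by (simp add: hist0_def)
qed

lemma hist0_nth_le: "hist0 n \<delta> R a ! j \<le> a ! j"
proof -
  have "histN n \<delta> R i b ! j \<le> b ! j" for i b
  proof (induction i arbitrary: b)
    case (Suc i)
    then show ?case using hist_step_nth_le order_trans by (metis histN.simps(2))
  qed simp
  then show ?thesis by (simp add: hist0_def)
qed

lemma take_hist0_eq:
  assumes "take m a = take m b"
  shows "take m (hist0 n \<delta> R a) = take m (hist0 n \<delta> R b)"
proof -
  have "take m (histN n \<delta> R i a) = take m (histN n \<delta> R i b)" for i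
    using assms
  proof (induction i arbitrary: a b)
    case (Suc i)
    then show ?case using take_hist_step_eq by (metis histN.simps(2))
  qed simp
  then show ?thesis by (simp add: hist0_def)
qed

lemma hist0_append: "hist0 n \<delta> (xs @ c # ys) a = hist0 n \<delta> (xs @ [c]) (hist0 n \<delta> (c # ys) a)"
  by (induction xs rule: induct_list012) (simp_all add: hist0_singleton hist0_Cons_Cons)

lemma hist0_nth_le_hist0_drop:
  assumes "i < length R"
  shows "hist0 n \<delta> R a ! j \<le> hist0 n \<delta> (drop i R) a ! j"
proof -
  have "R = take i R @ R ! i # drop (Suc i) R" using assms by (simp add: id_take_nth_drop)
  moreover have "drop i R = R ! i # drop (Suc i) R" using assms by (simp add: Cons_nth_drop_Suc)
  ultimately have "hist0 n \<delta> R a = hist0 n \<delta> (take i R @ [R ! i]) (hist0 n \<delta> (drop i R) a)"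
    by (metis hist0_append)
  then show ?thesis by (simp add: hist0_nth_le)
qed

lemma is_run_drop:
  assumes "is_run n \<delta> R" "i < length R"
  shows "is_run n \<delta> (drop i R)"
  unfolding is_run_def
proof (intro conjI allI impI)
  show "drop i R \<noteq> []" using assms(2) by simp
  show "\<forall>c\<in>set (drop i R). wf n (snd c)"
    using assms(1) by (auto simp: is_run_def dest: in_set_dropD)
  fix j assume j: "0 < j \<and> j < length (drop i R)"
  then have "succ n \<delta> (R ! (i + j - 1)) (R ! (i + j))"
    using assms(1) by (auto simp: is_run_def)
  moreover have "i + j - 1 = i + (j - 1)" using j by simp
  ultimately show "succ n \<delta> (drop i R ! (j - 1)) (drop i R ! j)"
    using assms(2) by simp
qed

lemma is_run_ConsD:
  assumes "is_run n \<delta> (c # c' # cs)"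
  shows "wf n (snd c)" "succ n \<delta> c c'" "is_run n \<delta> (c' # cs)"
  using assms is_run_drop[OF assms, of 1] unfolding is_run_def by (auto elim!: allE[of _ 1])

lemma hist0_pos:
  "is_run n \<delta> R \<Longrightarrow> a \<in> pos n (snd (last R)) \<Longrightarrow> hist0 n \<delta> R a \<in> pos n (snd (hd R))"
proof (induction R rule: induct_list012)
  case (3 c c' cs)
  then show ?case
    using is_run_ConsD[OF "3.prems"(1)] by (simp add: hist0_Cons_Cons hist_step_pos)
qed (simp_all add: is_run_def hist0_singleton)

lemma hist0_enters_top:
  assumes "is_run n \<delta> R" "length a = n" "m < n" "in_top (Suc m) (snd (last R)) a"
  shows "\<exists>j < length R. in_top (Suc m) (snd (R ! j)) (hist0 n \<delta> (drop j R) a)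
                     \<and> hist0 n \<delta> R a ! m = hist0 n \<delta> (drop j R) a ! m"
  using assms(1,4)
proof (induction R rule: induct_list012)
  case (2 c)
  then show ?case by (auto simp: hist0_singleton)
next
  case (3 c c' cs)
  note run = is_run_ConsD[OF "3.prems"(1)]
  show ?case
  proof (cases "in_top (Suc m) (snd c) (hist0 n \<delta> (c # c' # cs) a)")
    case True
    then show ?thesis by auto
  next
    case False
    from "3.IH"(2) run(3) "3.prems"(2) obtain j where
      "j < length (c' # cs)" "in_top (Suc m) (snd ((c' # cs) ! j)) (hist0 n \<delta> (drop j (c' # cs)) a)"
      "hist0 n \<delta> (c' # cs) a ! m = hist0 n \<delta> (drop j (c' # cs)) a ! m"
      by auto
    moreover have "hist0 n \<delta> (c # c' # cs) a ! m = hist0 n \<delta> (c' # cs) a ! m"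
      using False in_top_hist_step_if_nth_changed[OF run(2,1) _ assms(3)]
      by (metis hist0_Cons_Cons length_hist0 assms(2))
    ultimately show ?thesis by (intro exI[of _ "Suc j"]) simp
  qed
qed (simp add: is_run_def)

lemma upper_iff_in_top_hist0:
  assumes "is_run n \<delta> R" "a \<in> pos n (snd (last R))" "in_top (n - k) (snd (last R)) a"
  shows "upper n \<delta> k R \<longleftrightarrow> in_top (n - k) (snd (hd R)) (hist0 n \<delta> R a)"
proof
  assume "upper n \<delta> k R"
  then show "in_top (n - k) (snd (hd R)) (hist0 n \<delta> R a)"
    using assms(2,3) by (simp add: upper_def hist_is_def topaddr_def in_top_def)
next
  assume top: "in_top (n - k) (snd (hd R)) (hist0 n \<delta> R a)"
  have "take (n - k) (hist0 n \<delta> R b) = tpath (n - k) (snd (hd R))"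
    if "take (n - k) b = tpath (n - k) (snd (last R))" for b
    using take_hist0_eq[of "n - k" b a n \<delta> R] that assms(3) top by (simp add: in_top_def)
  then show "upper n \<delta> k R"
    using hist0_pos[OF assms(1)] by (simp add: upper_def hist_is_def topaddr_def)
qed

lemma upper_drop_iff_in_top_hist0:
  assumes "is_run n \<delta> R" "i < length R"
  shows "upper n \<delta> k (drop i R) \<longleftrightarrow>
    in_top (n - k) (snd (R ! i)) (hist0 n \<delta> (drop i R) (tpath n (snd (last R))))"
proof -
  have "wf n (snd (last R))" using assms(1) by (simp add: is_run_def)
  then show ?thesis
    using upper_iff_in_top_hist0[OF is_run_drop[OF assms], of "tpath n (snd (last R))" k] assms(2)
    by (simp add: tpath_pos in_top_tpath hd_drop_conv_nth)
qed

theorem mainTheorem5: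
  fixes n k :: nat
    and \<delta> :: "('q::finite, 'a::finite, 'g::finite) dpda"
    and R :: "('q, 'g) conf list"
  assumes "is_dpda n \<delta>"
    and "1 \<le> k" and "k \<le> n"
    and "is_run n \<delta> R"
    and "upper n \<delta> k R"
  shows "upper n \<delta> (k - 1) R \<longleftrightarrow>
           (\<forall>i \<le> length R - 1. upper n \<delta> k (drop i R) \<longrightarrow>
              topk_len n k (snd (R ! 0)) \<le> topk_len n k (snd (R ! i)))"
proof -
  define m where "m = n - k"
  define top where "top = tpath n (snd (last R))"
  define h where "h i = hist0 n \<delta> (drop i R) top" for i
  have m: "m < n" "n - (k - 1) = Suc m" using assms(2,3) by (auto simp: m_def)
  have R: "R \<noteq> []" "wf n (snd (last R))" using assms(4) by (auto simp: is_run_def)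
  have top: "top \<in> pos n (snd (last R))" "length top = n"
    using tpath_pos[OF R(2)] length_pos by (auto simp: top_def)
  have len: "topk_len n k s = length (children (descend m s))" for s :: "'g stk"
    by (simp add: topk_len_def topk_def m_def)
  have upper_drop: "upper n \<delta> k (drop i R) \<longleftrightarrow> in_top m (snd (R ! i)) (h i)" if "i < length R" for i
    using upper_drop_iff_in_top_hist0[OF assms(4) that] by (simp add: h_def m_def top_def)
  have h_le: "h i ! m \<le> topk_len n k (snd (R ! i))" if "upper n \<delta> k (drop i R)" "i < length R" for i
    using pos_nth_le_length[OF hist0_pos[OF is_run_drop[OF assms(4)]]] that upper_drop top m
    by (simp add: h_def len hd_drop_conv_nth)
  have "m < length (h 0)" using top m by (simp add: h_def length_hist0)
  then have upper_pred: "upper n \<delta> (k - 1) R \<longleftrightarrow> h 0 ! m = topk_len n k (snd (R ! 0))"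
    using upper_drop_iff_in_top_hist0[OF assms(4), of 0 "k - 1"] upper_drop[of 0] assms(5) R m
    by (simp add: in_top_Suc h_def top_def len)
  show ?thesis
  proof
    assume "upper n \<delta> (k - 1) R"
    then have h0: "h 0 ! m = topk_len n k (snd (R ! 0))" using upper_pred by simp
    show "\<forall>i \<le> length R - 1. upper n \<delta> k (drop i R) \<longrightarrow>
              topk_len n k (snd (R ! 0)) \<le> topk_len n k (snd (R ! i))"
    proof (intro allI impI)
      fix i assume "i \<le> length R - 1" and upper_i: "upper n \<delta> k (drop i R)"
      then have i: "i < length R" using R(1) by (simp add: le_diff_conv2 Suc_le_eq)
      have "topk_len n k (snd (R ! 0)) = h 0 ! m" using h0 by simp
      also have "\<dots> \<le> h i ! m" using hist0_nth_le_hist0_drop[OF i] by (simp add: h_def)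
      also have "\<dots> \<le> topk_len n k (snd (R ! i))" using h_le[OF upper_i i] .
      finally show "topk_len n k (snd (R ! 0)) \<le> topk_len n k (snd (R ! i))" .
    qed
  next
    assume sub: "\<forall>i \<le> length R - 1. upper n \<delta> k (drop i R) \<longrightarrow>
              topk_len n k (snd (R ! 0)) \<le> topk_len n k (snd (R ! i))"
    obtain j where j: "j < length R" "in_top (Suc m) (snd (R ! j)) (h j)" "h 0 ! m = h j ! m"
      using hist0_enters_top[OF assms(4) top(2) m(1)] m(1)
      by (auto simp: h_def top_def in_top_tpath)
    have hj: "m < length (h j)" using top m by (simp add: h_def length_hist0)
    have "upper n \<delta> k (drop j R)" "h j ! m = topk_len n k (snd (R ! j))"
      using j(1) j(2)[unfolded in_top_Suc[OF hj]] upper_drop len by simp_all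
    then have "topk_len n k (snd (R ! 0)) \<le> h 0 ! m" using sub j by auto
    then show "upper n \<delta> (k - 1) R"
      using upper_pred h_le[of 0] assms(5) R(1) by simp
  qed
qed

end
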